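(* A magma $(Q,\cdot)$ is a Ward quasigroup if and only if it is cancellative and satisfies $(xz)(yz)=xy$ for all $x,y,z\in Q$.
   Context: A Ward quasigroup is a quasigroup (a magma in which $ax=b$ and $ya=b$ have unique solutions for all $a,b$) satisfying $(xz)(yz)=xy$ for all $x,y,z$. A magma is cancellative if $ax=ay\Rightarrow x=y$ and $xa=ya\Rightarrow x=y$. *)

theory Defs
  imports Main
begin

definition magma :: "'a set \<Rightarrow> ('a \<Rightarrow> 'a \<Rightarrow> 'a) \<Rightarrow> bool" where
  "magma Q m \<longleftrightarrow> (\<forall>x\<in>Q. \<forall>y\<in>Q. m x y \<in> Q)"

definition quasigroup :: "'a set \<Rightarrow> ('a \<Rightarrow> 'a \<Rightarrow> 'a) \<Rightarrow> bool" where
  "quasigroup Q m \<longleftrightarrow> magma Q m \<and>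
     (\<forall>a\<in>Q. \<forall>b\<in>Q. (\<exists>!x. x \<in> Q \<and> m a x = b) \<and> (\<exists>!y. y \<in> Q \<and> m y a = b))"

definition ward_identity :: "'a set \<Rightarrow> ('a \<Rightarrow> 'a \<Rightarrow> 'a) \<Rightarrow> bool" where
  "ward_identity Q m \<longleftrightarrow> (\<forall>x\<in>Q. \<forall>y\<in>Q. \<forall>z\<in>Q. m (m x z) (m y z) = m x y)"

definition ward_quasigroup :: "'a set \<Rightarrow> ('a \<Rightarrow> 'a \<Rightarrow> 'a) \<Rightarrow> bool" where
  "ward_quasigroup Q m \<longleftrightarrow> quasigroup Q m \<and> ward_identity Q m"

definition cancellative :: "'a set \<Rightarrow> ('a \<Rightarrow> 'a \<Rightarrow> 'a) \<Rightarrow> bool" where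
  "cancellative Q m \<longleftrightarrow> (\<forall>a\<in>Q. \<forall>x\<in>Q. \<forall>y\<in>Q.
     (m a x = m a y \<longrightarrow> x = y) \<and> (m x a = m y a \<longrightarrow> x = y))"

end

theory Submission
  imports Defs
begin

text \<open>A magma is a quasigroup iff it is cancellative and all equations a x = b and y a = b
  have solutions; so it suffices to solve these equations in a cancellative magma with the
  Ward identity. There every square is the same element e, which is a right unit, left
  multiplication by e is an involution, and e (u v) = v u. The magma then behaves like a group
  under x y = x y^-1 with inverse e x, and the solutions are x = (e b) (e a) and
  y = b (e a).\<close>

lemma quasigroup_iff_cancellative_solvable:
  assumes "magma Q m"
  shows "quasigroup Q m \<longleftrightarrow>
    cancellative Q m \<and> (\<forall>a\<in>Q. \<forall>b\<in>Q. (\<exists>x\<in>Q. m a x = b) \<and> (\<exists>y\<in>Q. m y a = b))"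
proof
  assume "quasigroup Q m"
  then have unique: "\<exists>!x. x \<in> Q \<and> m a x = b" "\<exists>!y. y \<in> Q \<and> m y a = b"
    if "a \<in> Q" "b \<in> Q" for a b
    using that unfolding quasigroup_def by blast+
  have "cancellative Q m"
    unfolding cancellative_def
  proof (intro ballI conjI impI)
    fix a x y assume "a \<in> Q" "x \<in> Q" "y \<in> Q"
    then have "m a x \<in> Q" "m x a \<in> Q"
      using assms unfolding magma_def by blast+
    show "x = y" if "m a x = m a y"
      using unique(1)[OF \<open>a \<in> Q\<close> \<open>m a x \<in> Q\<close>] \<open>x \<in> Q\<close> \<open>y \<in> Q\<close> that by metis
    show "x = y" if "m x a = m y a"
      using unique(2)[OF \<open>a \<in> Q\<close> \<open>m x a \<in> Q\<close>] \<open>x \<in> Q\<close> \<open>y \<in> Q\<close> that by metis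
  qed
  then show "cancellative Q m \<and> (\<forall>a\<in>Q. \<forall>b\<in>Q. (\<exists>x\<in>Q. m a x = b) \<and> (\<exists>y\<in>Q. m y a = b))"
    using unique by blast
next
  assume "cancellative Q m \<and> (\<forall>a\<in>Q. \<forall>b\<in>Q. (\<exists>x\<in>Q. m a x = b) \<and> (\<exists>y\<in>Q. m y a = b))"
  then show "quasigroup Q m"
    using assms unfolding quasigroup_def cancellative_def by metis
qed

locale cancellative_ward =
  fixes Q :: "'a set" and m :: "'a \<Rightarrow> 'a \<Rightarrow> 'a"
  assumes magma: "magma Q m"
    and cancellative: "cancellative Q m"
    and ward: "ward_identity Q m"
begin

lemma closed [simp, intro]: "x \<in> Q \<Longrightarrow> y \<in> Q \<Longrightarrow> m x y \<in> Q"
  using magma unfolding magma_def by blast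

lemma ward_eq: "x \<in> Q \<Longrightarrow> y \<in> Q \<Longrightarrow> z \<in> Q \<Longrightarrow> m (m x z) (m y z) = m x y"
  using ward unfolding ward_identity_def by blast

lemma cancel_left: "a \<in> Q \<Longrightarrow> x \<in> Q \<Longrightarrow> y \<in> Q \<Longrightarrow> m a x = m a y \<Longrightarrow> x = y"
  using cancellative unfolding cancellative_def by blast

lemma cancel_right: "a \<in> Q \<Longrightarrow> x \<in> Q \<Longrightarrow> y \<in> Q \<Longrightarrow> m x a = m y a \<Longrightarrow> x = y"
  using cancellative unfolding cancellative_def by blast

lemma mult_square_right [simp]:
  assumes "x \<in> Q" "y \<in> Q"
  shows "m x (m y y) = x"
proof -
  let ?t = "m y y"
  have "m ?t ?t = ?t"
    using ward_eq assms(2) by blast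
  then have "m (m x ?t) ?t = m x ?t"
    using ward_eq[of x ?t ?t] assms by auto
  then show ?thesis
    using cancel_right[of ?t "m x ?t" x] assms by auto
qed

lemma square_eq:
  assumes "x \<in> Q" "y \<in> Q"
  shows "m x x = m y y"
proof -
  have "m x (m x x) = m x (m y y)"
    using assms by simp
  then show ?thesis
    using cancel_left[of x "m x x" "m y y"] assms by simp
qed

lemma square_mult_square_mult [simp]:
  assumes "x \<in> Q" "c \<in> Q"
  shows "m (m c c) (m (m c c) x) = x"
  using ward_eq[of x "m c c" x] square_eq[of x c] assms by auto

lemma square_mult_swap:
  assumes "u \<in> Q" "v \<in> Q" "c \<in> Q"
  shows "m (m c c) (m u v) = m v u"
  using ward_eq[of v u v] square_eq[of v c] assms by auto

lemma exists_right_division: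
  assumes "a \<in> Q" "b \<in> Q"
  shows "\<exists>y\<in>Q. m y a = b"
proof
  let ?e = "m a a"
  have "m (m b (m ?e a)) (m ?e (m ?e a)) = m b ?e"
    using ward_eq assms by blast
  then show "m (m b (m ?e a)) a = b"
    using assms by simp
qed (use assms in auto)

lemma exists_left_division:
  assumes "a \<in> Q" "b \<in> Q"
  shows "\<exists>x\<in>Q. m a x = b"
proof
  let ?e = "m a a"
  let ?x = "m (m ?e b) (m ?e a)"
  have "m ?x (m ?e (m ?e a)) = m (m ?e b) ?e"
    using ward_eq assms by blast
  then have "m ?x a = m ?e b"
    using assms by simp
  then have "m ?e (m a ?x) = m ?e b"
    using square_mult_swap[of a ?x a] assms by auto
  then show "m a ?x = b"
    using cancel_left[of ?e "m a ?x" b] assms by auto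
qed (use assms in auto)

end

theorem lemma6p4:
  fixes Q :: "'a set" and m :: "'a \<Rightarrow> 'a \<Rightarrow> 'a"
  assumes "magma Q m"
  shows "ward_quasigroup Q m \<longleftrightarrow> cancellative Q m \<and> ward_identity Q m"
proof
  assume "ward_quasigroup Q m"
  then show "cancellative Q m \<and> ward_identity Q m"
    using quasigroup_iff_cancellative_solvable[OF assms] unfolding ward_quasigroup_def by blast
next
  assume "cancellative Q m \<and> ward_identity Q m"
  then interpret cancellative_ward Q m
    using assms by unfold_locales auto
  show "ward_quasigroup Q m"
    unfolding ward_quasigroup_def quasigroup_iff_cancellative_solvable[OF assms]
    using cancellative ward exists_right_division exists_left_division by blast
qed

end
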